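(* Let $\alpha>1$ and let $h_0\ge0$ be an integer. Let $D_0=[-\lceil h_0^\alpha\rceil,\lceil h_0^\alpha\rceil]\times[0,h_0]$, $U_{h_0}=\{x\in\mathbb{H}:\ |x_1|\ge\lceil h_0^\alpha\rceil,\ x_2\le|x_1|^{1/\alpha}\}$, $\hat W=D_0\cup U_{h_0}$, and $\xi_0=(0,h_0)$. Then there is a constant $c>0$ such that for all sufficiently large $k$, $$P_{\xi_0}\big(\tau_{L_{2^k}}<\tau_{\hat W}\big)\ge c\,2^{-k}\qquad\text{and}\qquad \bar{\mathcal H}_{\hat W,N}(\xi_0)\ge c\ \text{ for all sufficiently large } N.$$
   Context: $\mathbb{H}=\{(x_1,x_2)\in\mathbb{Z}^2:\ x_2\ge 0\}$ and $L_n=\{(x_1,n):x_1\in\mathbb{Z}\}$. $(S_n)_{n\ge0}$ is a simple random walk on $\mathbb{Z}^2$; $P_z$ denotes its law started at $z$. For $A\subset\mathbb{Z}^2$, $\bar\tau_A=\min\{n\ge0: S_n\in A\}$ and $\tau_A=\min\{n\ge1:S_n\in A\}$. For $A\subset\mathbb{H}$, $x\in A$ and $N\ge1$, define $$\bar{\mathcal H}_{A,N}(x)=\sum_{z\in L_N\setminus A}P_z\big(S_{\bar\tau_{A\cup L_0}}=x\big).$$ Integer intervals $[a,b]$ denote $\{a,a+1,\dots,b\}$. *)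

theory Defs
  imports "HOL-Probability.Probability"
begin

type_synonym pt = "int \<times> int"

definition srw_step :: "pt pmf" where
  "srw_step = pmf_of_set {(1,0), (-1,0), (0,1), (0,-1)}"

definition SRW :: "pt stream measure" where
  "SRW = stream_space (measure_pmf srw_step)"

definition walk :: "pt \<Rightarrow> pt stream \<Rightarrow> nat \<Rightarrow> pt" where
  "walk z \<omega> n = (fst z + (\<Sum>i<n. fst (\<omega> !! i)), snd z + (\<Sum>i<n. snd (\<omega> !! i)))"

definition Hplane :: "pt set" where
  "Hplane = {x. snd x \<ge> 0}"

definition line :: "int \<Rightarrow> pt set" where
  "line n = {x. snd x = n}"

text \<open>P_z(tau_B < tau_A), with tau the first hitting times at times n >= 1.\<close>
definition hit_before :: "pt \<Rightarrow> pt set \<Rightarrow> pt set \<Rightarrow> real" where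
  "hit_before z B A = measure SRW
     {\<omega> \<in> space SRW. \<exists>n\<ge>1. walk z \<omega> n \<in> B \<and> (\<forall>m. 1 \<le> m \<and> m \<le> n \<longrightarrow> walk z \<omega> m \<notin> A)}"

text \<open>P_z(S at bar-tau_A (times n >= 0) equals x).\<close>
definition hit_at :: "pt \<Rightarrow> pt set \<Rightarrow> pt \<Rightarrow> ennreal" where
  "hit_at z A x = emeasure SRW
     {\<omega> \<in> space SRW. \<exists>n. walk z \<omega> n = x \<and> (\<forall>m<n. walk z \<omega> m \<notin> A)}"

definition Hbar :: "pt set \<Rightarrow> int \<Rightarrow> pt \<Rightarrow> ennreal" where
  "Hbar A N x = (\<Sum>\<^sub>\<infinity> z \<in> line N - A. hit_at z (A \<union> line 0) x)"

definition D0 :: "real \<Rightarrow> nat \<Rightarrow> pt set" where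
  "D0 \<alpha> h0 = {x. \<bar>fst x\<bar> \<le> \<lceil>real h0 powr \<alpha>\<rceil> \<and> 0 \<le> snd x \<and> snd x \<le> int h0}"

definition U :: "real \<Rightarrow> nat \<Rightarrow> pt set" where
  "U \<alpha> h0 = {x \<in> Hplane. \<bar>fst x\<bar> \<ge> \<lceil>real h0 powr \<alpha>\<rceil> \<and>
        real_of_int (snd x) \<le> real_of_int \<bar>fst x\<bar> powr (1 / \<alpha>)}"

definition What :: "real \<Rightarrow> nat \<Rightarrow> pt set" where
  "What \<alpha> h0 = D0 \<alpha> h0 \<union> U \<alpha> h0"

end

theory Submission
  imports Defs
begin

text \<open>
  Let \<open>q = 2 powr (1/\<alpha>)\<close>, so \<open>1 < q < 2\<close>. The barrier
  \<open>Q x = h0 + 1 + (\<Sum>j. q^j (1 - exp (- \<lambda>j x2) cos (\<mu>j x1)))\<close> with \<open>\<mu>j = \<pi> / 2^j\<close> and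
  \<open>cosh \<lambda>j + cos \<mu>j = 2\<close> is discrete harmonic in the upper half-plane. It grows like
  \<open>|x1| powr (1/\<alpha>)\<close>, so \<open>Q \<ge> x2 + 1\<close> on \<open>What\<close>, but on the axis only like
  \<open>Q (0, 2^J) = O(q^J)\<close>, so \<open>Q (0, H) \<le> H - 1\<close> for some \<open>H > h0\<close>.
  Hence \<open>max 0 (x2 - Q) / R\<close> is a subsolution for the probability of reaching \<open>L_R\<close> before
  \<open>What\<close>, and \<open>max 0 (min x2 (2N - x2) - Q)\<close> one for the expected number of visits to
  \<open>L_N\<close> before \<open>What \<union> L_2N\<close>. The region between \<open>What\<close> and the top line is finite, so a
  discrete maximum principle bounds these quantities at \<open>(0, H)\<close> below by \<open>1/(2R)\<close> and
  \<open>1/2\<close>; walking straight up from \<open>(0, h0)\<close> to \<open>(0, H)\<close> costs only the factor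
  \<open>4^-(H - h0)\<close>. Time reversal of path counts turns the visits to \<open>L_N\<close> into \<open>Hbar\<close>.
\<close>

section \<open>The walk and its first step\<close>

lemma space_SRW [simp]: "space SRW = UNIV"
  by (simp add: SRW_def space_stream_space)

interpretation SRW: prob_space SRW
  unfolding SRW_def by (rule prob_space.prob_space_stream_space[OF prob_space_measure_pmf])

lemma measure_SRW_UNIV [simp]: "measure SRW UNIV = 1"
  using SRW.prob_space by simp

lemma walk_0 [simp]: "walk z \<omega> 0 = z"
  by (simp add: walk_def)

lemma walk_Cons: "walk z (t ## \<omega>) (Suc n) = walk (z + t) \<omega> n"
  by (simp add: walk_def sum.lessThan_Suc_shift del: sum.lessThan_Suc)

lemma walk_stake:
  "walk z \<omega> n = (fst z + sum_list (map fst (stake n \<omega>)), snd z + sum_list (map snd (stake n \<omega>)))"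
  by (induct n) (auto simp: walk_def stake_Suc simp del: stake.simps(2))

lemma measurable_walk [measurable]: "(\<lambda>\<omega>. walk z \<omega> n) \<in> measurable SRW (count_space UNIV)"
proof -
  have "stake n \<in> measurable (stream_space (count_space UNIV)) (count_space (UNIV :: pt list set))"
    by measurable
  then have "stake n \<in> measurable SRW (count_space (UNIV :: pt list set))"
    unfolding SRW_def
    by (subst measurable_cong_sets[OF sets_stream_space_cong[OF sets_measure_pmf_count_space] refl])
  then show ?thesis
    unfolding walk_stake by measurable
qed

lemma sets_SRW_Cons: "X \<in> sets SRW \<Longrightarrow> {\<omega>. t ## \<omega> \<in> X} \<in> sets SRW"
proof -
  assume X: "X \<in> sets SRW"
  have "(\<lambda>\<omega>. t ## \<omega>) \<in> measurable SRW SRW"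
    unfolding SRW_def by measurable
  from measurable_sets[OF this X] show ?thesis
    by (simp add: vimage_def)
qed

lemma measure_SRW_first_step:
  assumes X: "X \<in> sets SRW"
  shows "measure SRW X = (measure SRW {\<omega>. (1,0) ## \<omega> \<in> X} + measure SRW {\<omega>. (-1,0) ## \<omega> \<in> X}
     + measure SRW {\<omega>. (0,1) ## \<omega> \<in> X} + measure SRW {\<omega>. (0,-1) ## \<omega> \<in> X}) / 4"
    (is "_ = ?rhs")
proof -
  let ?g = "\<lambda>t. emeasure SRW {\<omega>. t ## \<omega> \<in> X}"
  have "emeasure SRW X = (\<integral>\<^sup>+t. ?g t \<partial>measure_pmf srw_step)"
    using prob_space.emeasure_stream_space[OF prob_space_measure_pmf X[unfolded SRW_def]]
    by (simp add: SRW_def[symmetric])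
  also have "\<dots> = (?g (1,0) + ?g (-1,0) + ?g (0,1) + ?g (0,-1)) / 4"
    unfolding srw_step_def by (subst nn_integral_pmf_of_set) (auto simp: add.assoc)
  finally have "ennreal (measure SRW X) = ennreal ?rhs"
    using sets_SRW_Cons[OF X]
    by (simp add: SRW.emeasure_eq_measure divide_ennreal[symmetric] ennreal_plus[symmetric]
        del: ennreal_plus)
  then show ?thesis
    by (subst (asm) ennreal_inj) auto
qed

definition hit_before_event :: "pt set \<Rightarrow> pt set \<Rightarrow> nat \<Rightarrow> pt \<Rightarrow> pt stream set" where
  "hit_before_event B A T z =
     {\<omega>. \<exists>n. 1 \<le> n \<and> n \<le> T \<and> walk z \<omega> n \<in> B \<and> (\<forall>m. 1 \<le> m \<and> m \<le> n \<longrightarrow> walk z \<omega> m \<notin> A)}"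

definition hit_at_event :: "pt set \<Rightarrow> pt \<Rightarrow> nat \<Rightarrow> pt \<Rightarrow> pt stream set" where
  "hit_at_event A x T z = {\<omega>. \<exists>n\<le>T. walk z \<omega> n = x \<and> (\<forall>m<n. walk z \<omega> m \<notin> A)}"

lemma sets_hit_before_event [measurable]: "hit_before_event B A T z \<in> sets SRW"
proof -
  have "{\<omega> \<in> space SRW. \<exists>n. 1 \<le> n \<and> n \<le> T \<and> walk z \<omega> n \<in> B \<and>
      (\<forall>m. 1 \<le> m \<and> m \<le> n \<longrightarrow> walk z \<omega> m \<notin> A)} \<in> sets SRW"
    by measurable
  then show ?thesis by (simp add: hit_before_event_def)
qed

lemma sets_hit_at_event [measurable]: "hit_at_event A x T z \<in> sets SRW"
proof -
  have "{\<omega> \<in> space SRW. \<exists>n\<le>T. walk z \<omega> n = x \<and> (\<forall>m<n. walk z \<omega> m \<notin> A)} \<in> sets SRW"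
    by measurable
  then show ?thesis by (simp add: hit_at_event_def)
qed

lemma ex_between_Suc:
  "(\<exists>n. 1 \<le> n \<and> n \<le> Suc T \<and> P n) \<longleftrightarrow> P 1 \<or> (\<exists>n. 1 \<le> n \<and> n \<le> T \<and> P (Suc n))"
proof
  assume "\<exists>n. 1 \<le> n \<and> n \<le> Suc T \<and> P n"
  then obtain n where "1 \<le> n" "n \<le> Suc T" "P n" by blast
  then show "P 1 \<or> (\<exists>n. 1 \<le> n \<and> n \<le> T \<and> P (Suc n))"
    by (cases "n = 1") (auto intro!: exI[of _ "n - 1"])
qed (auto intro: le_SucI)

lemma all_between_Suc:
  "(\<forall>m. 1 \<le> m \<and> m \<le> Suc n \<longrightarrow> P m) \<longleftrightarrow> P 1 \<and> (\<forall>m. 1 \<le> m \<and> m \<le> n \<longrightarrow> P (Suc m))"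
  using ex_between_Suc[of n "\<lambda>m. \<not> P m"] by blast

lemma ex_le_Suc: "(\<exists>n\<le>Suc T. P n) \<longleftrightarrow> P 0 \<or> (\<exists>n\<le>T. P (Suc n))"
  using Ex_less_Suc2[of "Suc T" P] by (simp add: less_Suc_eq_le)

lemma hit_before_event_Cons:
  "t ## \<omega> \<in> hit_before_event B A (Suc T) z \<longleftrightarrow>
     z + t \<notin> A \<and> (z + t \<in> B \<or> \<omega> \<in> hit_before_event B A T (z + t))"
  unfolding hit_before_event_def mem_Collect_eq ex_between_Suc all_between_Suc
  by (auto simp: walk_Cons)

lemma hit_at_event_Cons:
  "t ## \<omega> \<in> hit_at_event A x (Suc T) z \<longleftrightarrow> z = x \<or> (z \<notin> A \<and> \<omega> \<in> hit_at_event A x T (z + t))"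
  unfolding hit_at_event_def mem_Collect_eq ex_le_Suc
  by (auto simp: walk_Cons All_less_Suc2)

definition nbrs :: "pt \<Rightarrow> pt set" where
  "nbrs y = {y + (1,0), y + (-1,0), y + (0,1), y + (0,-1)}"

definition nbr_sum :: "(pt \<Rightarrow> real) \<Rightarrow> pt \<Rightarrow> real" where
  "nbr_sum f y = f (y + (1,0)) + f (y + (-1,0)) + f (y + (0,1)) + f (y + (0,-1))"

text \<open>One step of the walk: collect \<open>c\<close> at the new site, then stop there if it lies in
  \<open>S\<close> and otherwise continue with \<open>f\<close>.\<close>
definition step_avg :: "pt set \<Rightarrow> (pt \<Rightarrow> real) \<Rightarrow> (pt \<Rightarrow> real) \<Rightarrow> pt \<Rightarrow> real" where
  "step_avg S c f y = nbr_sum (\<lambda>y'. if y' \<in> S then c y' else c y' + f y') y / 4"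

lemma nbr_sum_le_sum:
  "(\<And>y'. y' \<in> nbrs y \<Longrightarrow> f y' \<le> g y' + E) \<Longrightarrow> nbr_sum f y \<le> nbr_sum g y + 4 * E"
  unfolding nbr_sum_def nbrs_def by (smt (verit) insertCI)

lemma nbr_sum_mono: "(\<And>y'. y' \<in> nbrs y \<Longrightarrow> f y' \<le> g y') \<Longrightarrow> nbr_sum f y \<le> nbr_sum g y"
  using nbr_sum_le_sum[of y f g 0] by simp

lemma nbr_sum_nonneg: "(\<And>y'. 0 \<le> f y') \<Longrightarrow> 0 \<le> nbr_sum f y"
  unfolding nbr_sum_def by simp

lemma nbr_sum_const: "nbr_sum (\<lambda>_. a) y = 4 * a"
  unfolding nbr_sum_def by simp

lemma nbr_sum_add: "nbr_sum (\<lambda>y. f y + g y) z = nbr_sum f z + nbr_sum g z"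
  unfolding nbr_sum_def by simp

lemma nbr_sum_diff: "nbr_sum (\<lambda>y. f y - g y) z = nbr_sum f z - nbr_sum g z"
  unfolding nbr_sum_def by simp

lemma nbr_sum_cmult: "nbr_sum (\<lambda>y. a * f y) z = a * nbr_sum f z"
  unfolding nbr_sum_def by (simp add: algebra_simps)

lemma nbr_sum_divide: "nbr_sum (\<lambda>y. f y / a) z = nbr_sum f z / a"
  unfolding nbr_sum_def by (simp add: add_divide_distrib)

lemma nbr_sum_sum: "nbr_sum (\<lambda>y. \<Sum>n\<in>S. g n y) z = (\<Sum>n\<in>S. nbr_sum (g n) z)"
  unfolding nbr_sum_def by (simp add: sum.distrib)

lemma nbr_sum_swap: "nbr_sum (\<lambda>a. nbr_sum (F a) v) y = nbr_sum (\<lambda>b. nbr_sum (\<lambda>a. F a b) y) v"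
  unfolding nbr_sum_def by (simp add: algebra_simps)

lemma nbr_sum_snd: "nbr_sum (\<lambda>y. real_of_int (snd y)) z = 4 * real_of_int (snd z)"
  unfolding nbr_sum_def by simp

lemma step_avg_mono:
  assumes "\<And>y'. y' \<in> nbrs y \<Longrightarrow> y' \<notin> S \<Longrightarrow> f y' \<le> g y' + E" and "0 \<le> E"
  shows "step_avg S c f y \<le> step_avg S c g y + E"
  using nbr_sum_le_sum[of y "\<lambda>y'. if y' \<in> S then c y' else c y' + f y'"
      "\<lambda>y'. if y' \<in> S then c y' else c y' + g y'" E] assms
  unfolding step_avg_def by fastforce

lemma step_avg_nonneg: "(\<And>y. 0 \<le> c y) \<Longrightarrow> (\<And>y. 0 \<le> f y) \<Longrightarrow> 0 \<le> step_avg S c f y"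
  unfolding step_avg_def by (auto intro!: nbr_sum_nonneg)

lemma step_avg_ge_up:
  assumes "\<And>y. 0 \<le> c y" "\<And>y. 0 \<le> f y" "y + (0,1) \<notin> S"
  shows "f (y + (0,1)) / 4 \<le> step_avg S c f y"
  using assms unfolding step_avg_def nbr_sum_def
  by (smt (verit, ccfv_threshold) divide_right_mono)

definition hit_before_within :: "pt set \<Rightarrow> pt set \<Rightarrow> nat \<Rightarrow> pt \<Rightarrow> real" where
  "hit_before_within B A T z = measure SRW (hit_before_event B A T z)"

definition hit_at_within :: "pt set \<Rightarrow> pt \<Rightarrow> nat \<Rightarrow> pt \<Rightarrow> real" where
  "hit_at_within A x T z = measure SRW (hit_at_event A x T z)"

lemma hit_before_within_nonneg: "0 \<le> hit_before_within B A T z"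
  by (simp add: hit_before_within_def)

lemma hit_before_within_Suc:
  "hit_before_within B A (Suc T) z = step_avg (A \<union> B) (indicator (B - A)) (hit_before_within B A T) z"
proof -
  have "measure SRW {\<omega>. t ## \<omega> \<in> hit_before_event B A (Suc T) z} =
      (if z + t \<in> A then 0 else if z + t \<in> B then 1 else hit_before_within B A T (z + t))" for t
    by (simp add: hit_before_event_Cons hit_before_within_def)
  then show ?thesis
    unfolding hit_before_within_def[of B A "Suc T"] measure_SRW_first_step[OF sets_hit_before_event]
    by (simp add: step_avg_def nbr_sum_def indicator_def)
qed

lemma hit_before_within_le_hit_before: "hit_before_within B A T z \<le> hit_before z B A"
proof -
  have "{\<omega> \<in> space SRW. \<exists>n\<ge>1. walk z \<omega> n \<in> B \<and> (\<forall>m. 1 \<le> m \<and> m \<le> n \<longrightarrow> walk z \<omega> m \<notin> A)}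
      \<in> sets SRW"
    by measurable
  then show ?thesis
    unfolding hit_before_within_def hit_before_def
    by (rule SRW.finite_measure_mono[rotated]) (auto simp: hit_before_event_def)
qed

lemma hit_at_within_0: "hit_at_within A x 0 z = (if z = x then 1 else 0)"
  by (simp add: hit_at_within_def hit_at_event_def)

lemma hit_at_within_Suc:
  "hit_at_within A x (Suc T) z =
     (if z = x then 1 else if z \<in> A then 0 else nbr_sum (hit_at_within A x T) z / 4)"
proof -
  have "{\<omega>. t ## \<omega> \<in> hit_at_event A x (Suc T) z} =
      (if z = x then UNIV else if z \<in> A then {} else hit_at_event A x T (z + t))" for t
    by (auto simp: hit_at_event_Cons)
  then show ?thesis
    unfolding hit_at_within_def[of A x "Suc T"] measure_SRW_first_step[OF sets_hit_at_event]
    by (simp add: nbr_sum_def hit_at_within_def)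
qed

lemma hit_at_within_le_hit_at: "ennreal (hit_at_within A x T z) \<le> hit_at z A x"
proof -
  have "{\<omega> \<in> space SRW. \<exists>n. walk z \<omega> n = x \<and> (\<forall>m<n. walk z \<omega> m \<notin> A)} \<in> sets SRW"
    by measurable
  then have "emeasure SRW (hit_at_event A x T z) \<le> hit_at z A x"
    unfolding hit_at_def by (rule emeasure_mono[rotated]) (auto simp: hit_at_event_def)
  then show ?thesis
    by (simp add: hit_at_within_def SRW.emeasure_eq_measure)
qed

section \<open>Path counts and time reversal\<close>

fun paths_avoiding :: "pt set \<Rightarrow> nat \<Rightarrow> pt \<Rightarrow> pt \<Rightarrow> real" where
  "paths_avoiding A 0 y v = (if y = v then 1 else 0)"
| "paths_avoiding A (Suc n) y v = nbr_sum (\<lambda>y'. if y' \<in> A then 0 else paths_avoiding A n y' v) y"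

lemma paths_avoiding_nonneg: "0 \<le> paths_avoiding A n y v"
  by (induction n arbitrary: y) (auto intro!: nbr_sum_nonneg)

lemma paths_avoiding_antimono: "A \<subseteq> A' \<Longrightarrow> paths_avoiding A' n y v \<le> paths_avoiding A n y v"
  by (induction n arbitrary: y) (auto intro!: nbr_sum_mono simp: paths_avoiding_nonneg)

lemma paths_avoiding_Suc_last:
  "paths_avoiding A (Suc n) y v = (if v \<in> A then 0 else nbr_sum (paths_avoiding A n y) v)"
proof (induction n arbitrary: y)
  case 0
  show ?case by (cases y, cases v) (auto simp: nbr_sum_def)
next
  case (Suc n)
  have "paths_avoiding A (Suc (Suc n)) y v =
      nbr_sum (\<lambda>y'. if y' \<in> A then 0 else paths_avoiding A (Suc n) y' v) y"
    by simp
  also have "\<dots> = (if v \<in> A then 0 else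
      nbr_sum (\<lambda>y'. nbr_sum (\<lambda>v'. if y' \<in> A then 0 else paths_avoiding A n y' v') v) y)"
    unfolding Suc.IH by (simp add: nbr_sum_def)
  also have "\<dots> = (if v \<in> A then 0 else nbr_sum (paths_avoiding A (Suc n) y) v)"
    by (simp add: nbr_sum_swap[of _ v y] paths_avoiding.simps(2)[symmetric]
        del: paths_avoiding.simps(2))
  finally show ?case .
qed

text \<open>Reversibility: paths into the target \<open>x \<in> A\<close> are counted as reversed paths out of \<open>x\<close>.\<close>
lemma hit_at_within_eq_paths:
  assumes "x \<in> A"
  shows "hit_at_within A x T z = (\<Sum>n\<le>T. paths_avoiding A n x z / 4 ^ n)"
proof (induction T arbitrary: z)
  case 0
  show ?case by (simp add: hit_at_within_0)
next
  case (Suc T)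
  have "(\<Sum>n\<le>Suc T. paths_avoiding A n x z / 4 ^ n) =
      paths_avoiding A 0 x z + (\<Sum>n\<le>T. paths_avoiding A (Suc n) x z / 4 ^ Suc n)"
    by (simp only: sum.atMost_Suc_shift power_0 div_by_1)
  also have "\<dots> = (if z = x then 1 else 0) +
      (if z \<in> A then 0 else nbr_sum (\<lambda>z'. \<Sum>n\<le>T. paths_avoiding A n x z' / 4 ^ n) z / 4)"
    by (simp add: paths_avoiding_Suc_last nbr_sum_sum nbr_sum_divide sum_divide_distrib
        mult.commute del: paths_avoiding.simps(2))
  also have "\<dots> = hit_at_within A x (Suc T) z"
    using assms by (simp add: hit_at_within_Suc Suc.IH[symmetric])
  finally show ?case ..
qed

text \<open>The expected number of visits to \<open>Z\<close> at times \<open>1..T\<close> before entering \<open>A\<close>.\<close>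
definition visits_before :: "pt set \<Rightarrow> pt set \<Rightarrow> nat \<Rightarrow> pt \<Rightarrow> real" where
  "visits_before A Z T y = (\<Sum>z\<in>Z. \<Sum>n=1..T. paths_avoiding A n y z / 4 ^ n)"

lemma visits_before_nonneg: "0 \<le> visits_before A Z T y"
  unfolding visits_before_def by (intro sum_nonneg divide_nonneg_pos paths_avoiding_nonneg) auto

lemma visits_before_Suc:
  assumes "finite Z"
  shows "visits_before A Z (Suc T) y = step_avg A (indicator (Z - A)) (visits_before A Z T) y"
proof -
  have visits_from_0: "(\<Sum>z\<in>Z. \<Sum>n\<le>T. paths_avoiding A n y' z / 4 ^ n) =
      indicator Z y' + visits_before A Z T y'" for y'
    using assms
    by (simp add: visits_before_def sum.distrib atMost_atLeast0 sum.atLeast_Suc_atMost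
        indicator_def del: paths_avoiding.simps(2))
  have "visits_before A Z (Suc T) y =
      (\<Sum>z\<in>Z. \<Sum>n\<le>T. paths_avoiding A (Suc n) y z / 4 ^ Suc n)"
    unfolding visits_before_def
    by (simp only: One_nat_def sum.shift_bounds_cl_Suc_ivl atMost_atLeast0)
  also have "\<dots> = nbr_sum (\<lambda>y'. \<Sum>z\<in>Z. \<Sum>n\<le>T.
      (if y' \<in> A then 0 else paths_avoiding A n y' z) / 4 ^ n) y / 4"
    by (simp add: nbr_sum_sum nbr_sum_divide sum_divide_distrib mult.commute)
  also have "\<dots> = nbr_sum (\<lambda>y'. if y' \<in> A then 0 else
      (\<Sum>z\<in>Z. \<Sum>n\<le>T. paths_avoiding A n y' z / 4 ^ n)) y / 4"
    by (intro arg_cong[where f="\<lambda>u. u / 4"] arg_cong2[where f=nbr_sum] refl ext) auto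
  also have "\<dots> = step_avg A (indicator (Z - A)) (visits_before A Z T) y"
    unfolding visits_from_0 step_avg_def
    by (intro arg_cong[where f="\<lambda>u. u / 4"] arg_cong2[where f=nbr_sum] refl ext)
      (simp add: indicator_def)
  finally show ?thesis .
qed

lemma visits_before_le_Hbar:
  assumes x: "x \<in> W \<union> line 0" and A: "W \<union> line 0 \<subseteq> A"
    and Z: "Z \<subseteq> line N - W" "finite Z"
  shows "ennreal (visits_before A Z T x) \<le> Hbar W N x"
proof -
  let ?A0 = "W \<union> line 0"
  have "visits_before A Z T x \<le> (\<Sum>z\<in>Z. \<Sum>n=1..T. paths_avoiding ?A0 n x z / 4 ^ n)"
    unfolding visits_before_def
    by (intro sum_mono divide_right_mono paths_avoiding_antimono A) auto
  also have "\<dots> \<le> (\<Sum>z\<in>Z. \<Sum>n\<le>T. paths_avoiding ?A0 n x z / 4 ^ n)"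
    by (intro sum_mono sum_mono2) (auto simp: paths_avoiding_nonneg)
  also have "\<dots> = (\<Sum>z\<in>Z. hit_at_within ?A0 x T z)"
    using x by (simp add: hit_at_within_eq_paths)
  finally have "ennreal (visits_before A Z T x) \<le> (\<Sum>z\<in>Z. ennreal (hit_at_within ?A0 x T z))"
    by (simp add: sum_ennreal hit_at_within_def ennreal_leI)
  also have "\<dots> \<le> (\<Sum>\<^sub>\<infinity>z\<in>Z. hit_at z ?A0 x)"
    using Z(2) by (simp add: sum_mono hit_at_within_le_hit_at)
  also have "\<dots> \<le> Hbar W N x"
    unfolding Hbar_def
    by (rule infsum_mono_neutral) (use Z in \<open>auto intro: nonneg_summable_on_complete\<close>)
  finally show ?thesis .
qed

section \<open>A discrete maximum principle\<close>

definition sqnorm :: "pt \<Rightarrow> real" where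
  "sqnorm y = real_of_int (fst y) ^ 2 + real_of_int (snd y) ^ 2"

lemma nbr_sum_sqnorm: "nbr_sum sqnorm y = 4 * sqnorm y + 4"
  by (cases y) (simp add: nbr_sum_def sqnorm_def power2_eq_square algebra_simps)

lemma strict_subsolution_le_iterates:
  assumes V_Suc: "\<And>T y. V (Suc T) y = step_avg S c (V T) y"
    and V_0: "\<And>y. y \<in> D \<Longrightarrow> 0 \<le> V 0 y"
    and closed: "\<And>y y'. y \<in> D \<Longrightarrow> y' \<in> nbrs y \<Longrightarrow> y' \<notin> S \<Longrightarrow> y' \<in> D"
    and f_le: "\<And>y. y \<in> D \<Longrightarrow> f y \<le> M"
    and strict: "\<And>y. y \<in> D \<Longrightarrow> f y + \<delta> \<le> step_avg S c f y"
    and "0 \<le> \<delta>" and "y \<in> D"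
  shows "f y \<le> V T y + max 0 (M - \<delta> * T)"
  using \<open>y \<in> D\<close>
proof (induction T arbitrary: y)
  case 0
  then show ?case using V_0 f_le by fastforce
next
  case (Suc T)
  have "step_avg S c f y \<le> step_avg S c (V T) y + max 0 (M - \<delta> * T)"
    using Suc closed by (intro step_avg_mono) auto
  then show ?case
    using strict[OF Suc.prems] V_Suc[of T y] \<open>0 \<le> \<delta>\<close> by (simp add: algebra_simps)
qed

lemma step_avg_add_sqnorm:
  assumes sub: "f y \<le> step_avg S c f y"
    and B: "\<And>u. u \<in> nbrs y \<Longrightarrow> sqnorm u \<le> B" and "0 \<le> \<eta>"
  shows "f y + \<eta> * (sqnorm y - B) + \<eta> \<le> step_avg S c (\<lambda>u. f u + \<eta> * (sqnorm u - B)) y"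
proof -
  have "step_avg S c f y + \<eta> * (sqnorm y + 1 - B) =
      nbr_sum (\<lambda>u. (if u \<in> S then c u else c u + f u) + \<eta> * (sqnorm u - B)) y / 4"
    by (simp add: step_avg_def nbr_sum_add nbr_sum_diff nbr_sum_cmult nbr_sum_sqnorm
        nbr_sum_const algebra_simps)
  also have "\<dots> \<le> step_avg S c (\<lambda>u. f u + \<eta> * (sqnorm u - B)) y"
  proof -
    have "\<eta> * (sqnorm u - B) \<le> 0" if "u \<in> nbrs y" for u
      using B[OF that] \<open>0 \<le> \<eta>\<close> by (simp add: mult_nonneg_nonpos)
    then show ?thesis
      unfolding step_avg_def by (intro divide_right_mono nbr_sum_mono) auto
  qed
  finally show ?thesis
    using sub by (simp add: algebra_simps)
qed

text \<open>The quadratic perturbation \<open>\<eta> (sqnorm - B)\<close>, with \<open>B\<close> bounding \<open>sqnorm\<close> near \<open>D\<close>,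
  makes the subsolution strict at the cost \<open>\<eta> B = \<epsilon>\<close>.\<close>
lemma subsolution_le_iterates:
  assumes V_Suc: "\<And>T y. V (Suc T) y = step_avg S c (V T) y"
    and V_0: "\<And>y. y \<in> D \<Longrightarrow> 0 \<le> V 0 y"
    and closed: "\<And>y y'. y \<in> D \<Longrightarrow> y' \<in> nbrs y \<Longrightarrow> y' \<notin> S \<Longrightarrow> y' \<in> D"
    and "finite D"
    and sub: "\<And>y. y \<in> D \<Longrightarrow> f y \<le> step_avg S c f y"
    and "y \<in> D" and "0 < \<epsilon>"
  shows "\<exists>T. f y - \<epsilon> \<le> V T y"
proof -
  let ?N = "D \<union> \<Union>(nbrs ` D)"
  have "finite ?N"
    using \<open>finite D\<close> by (auto simp: nbrs_def)
  define B where "B = max 1 (Max (sqnorm ` ?N))"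
  have B: "sqnorm y' \<le> B" if "y' \<in> ?N" for y'
    using Max_ge[OF finite_imageI[OF \<open>finite ?N\<close>] imageI[OF that], of sqnorm]
    by (simp add: B_def)
  have "0 < B"
    by (simp add: B_def)
  define M where "M = Max (f ` D)"
  have M: "f y' \<le> M" if "y' \<in> D" for y'
    using Max_ge[OF finite_imageI[OF \<open>finite D\<close>] imageI[OF that], of f] by (simp add: M_def)
  define \<eta> where "\<eta> = \<epsilon> / B"
  have "0 < \<eta>"
    using \<open>0 < B\<close> \<open>0 < \<epsilon>\<close> by (simp add: \<eta>_def)
  define g where "g y' = f y' + \<eta> * (sqnorm y' - B)" for y'
  have g_le: "g y' \<le> M" if "y' \<in> D" for y'
  proof -
    have "\<eta> * (sqnorm y' - B) \<le> 0"
      using B[of y'] that \<open>0 < \<eta>\<close> by (simp add: mult_nonneg_nonpos)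
    then show ?thesis
      using M[OF that] by (simp add: g_def)
  qed
  have g_strict: "g y' + \<eta> \<le> step_avg S c g y'" if "y' \<in> D" for y'
    unfolding g_def
    by (rule step_avg_add_sqnorm[OF sub[OF that] _ less_imp_le[OF \<open>0 < \<eta>\<close>]])
      (use B that in blast)
  define T where "T = nat \<lceil>M / \<eta>\<rceil>"
  have "M / \<eta> \<le> T"
    unfolding T_def by linarith
  then have "M - \<eta> * T \<le> 0"
    using \<open>0 < \<eta>\<close> by (simp add: field_simps)
  then have "g y \<le> V T y"
    using strict_subsolution_le_iterates[where T=T, OF V_Suc V_0 closed g_le g_strict _ \<open>y \<in> D\<close>]
      \<open>0 < \<eta>\<close> by simp
  moreover have "f y - \<epsilon> \<le> g y"
  proof -
    have "- \<epsilon> \<le> \<eta> * (sqnorm y - B)"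
      using \<open>0 < \<eta>\<close> \<open>0 < B\<close> by (simp add: \<eta>_def sqnorm_def field_simps)
    then show ?thesis by (simp add: g_def)
  qed
  ultimately show ?thesis by (meson order_trans)
qed

lemma iterates_climb:
  assumes V_Suc: "\<And>T y. V (Suc T) y = step_avg S c (V T) y"
    and c: "\<And>y. 0 \<le> c y" and V: "\<And>T y. 0 \<le> V T y"
    and free: "\<And>i. 1 \<le> i \<Longrightarrow> i \<le> m \<Longrightarrow> y + (0, int i) \<notin> S"
  shows "V T (y + (0, int m)) / 4 ^ m \<le> V (T + m) y"
  using free
proof (induction m arbitrary: y)
  case 0
  then show ?case by (simp add: zero_prod_def[symmetric])
next
  case (Suc m)
  have "V T (y + (0, int (Suc m))) / 4 ^ Suc m = V T ((y + (0,1)) + (0, int m)) / 4 ^ m / 4"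
    by (simp add: add.assoc)
  also have "\<dots> \<le> V (T + m) (y + (0,1)) / 4"
    using Suc.prems[of "Suc _"] by (intro divide_right_mono Suc.IH) (auto simp: add.assoc)
  also have "\<dots> \<le> V (T + Suc m) y"
    using step_avg_ge_up[of c "V (T + m)" y S] Suc.prems[of 1] V_Suc[of "T + m" y] c V by simp
  finally show ?case .
qed

lemma pos_part_subsolution:
  assumes c: "\<And>y. 0 \<le> c y"
    and g: "g y \<le> nbr_sum \<phi> y / 4"
    and \<phi>: "\<And>y'. y' \<in> nbrs y \<Longrightarrow> \<phi> y' \<le> (if y' \<in> S then c y' else c y' + max 0 (g y'))"
  shows "max 0 (g y) \<le> step_avg S c (\<lambda>y. max 0 (g y)) y"
proof -
  have "nbr_sum \<phi> y / 4 \<le> step_avg S c (\<lambda>y. max 0 (g y)) y"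
    unfolding step_avg_def using \<phi> by (intro divide_right_mono nbr_sum_mono) auto
  moreover have "0 \<le> step_avg S c (\<lambda>y. max 0 (g y)) y"
    using c by (intro step_avg_nonneg) auto
  ultimately show ?thesis
    using g by linarith
qed

lemma iterates_lower_bound_on_axis:
  assumes V_Suc: "\<And>T y. V (Suc T) y = step_avg S c (V T) y"
    and c: "\<And>y. 0 \<le> c y" and V: "\<And>T y. 0 \<le> V T y"
    and closed: "\<And>y y'. y \<in> D \<Longrightarrow> y' \<in> nbrs y \<Longrightarrow> y' \<notin> S \<Longrightarrow> y' \<in> D"
    and D: "finite D" "y + (0, int m) \<in> D"
    and sub: "\<And>y. y \<in> D \<Longrightarrow> f y \<le> step_avg S c f y"
    and free: "\<And>i. 1 \<le> i \<Longrightarrow> i \<le> m \<Longrightarrow> y + (0, int i) \<notin> S"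
    and "0 < \<epsilon>"
  shows "\<exists>T. (f (y + (0, int m)) - \<epsilon>) / 4 ^ m \<le> V T y"
proof -
  have "\<exists>T. f (y + (0, int m)) - \<epsilon> \<le> V T (y + (0, int m))"
    by (rule subsolution_le_iterates[where V=V and S=S and c=c and D=D and f=f])
      (use V_Suc V closed D sub \<open>0 < \<epsilon>\<close> in auto)
  then obtain T where "f (y + (0, int m)) - \<epsilon> \<le> V T (y + (0, int m))" ..
  then have "(f (y + (0, int m)) - \<epsilon>) / 4 ^ m \<le> V T (y + (0, int m)) / 4 ^ m"
    by (simp add: divide_right_mono)
  also have "\<dots> \<le> V (T + m) y"
    by (rule iterates_climb[where V=V and S=S and c=c, OF V_Suc c V free])
  finally show ?thesis ..
qed

section \<open>A harmonic barrier in the half-plane\<close>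

definition freq :: "nat \<Rightarrow> real" where
  "freq j = pi / 2 ^ j"

definition decay :: "nat \<Rightarrow> real" where
  "decay j = arcosh (2 - cos (freq j))"

text \<open>Each wave is discrete harmonic on all of \<open>\<int> \<times> \<int>\<close>, vanishes at the origin and is at
  least \<open>q ^ j\<close> where \<open>2 ^ j / 2 < |x1| \<le> 2 ^ j\<close> (the cosine is nonpositive there).\<close>
definition wave :: "real \<Rightarrow> nat \<Rightarrow> pt \<Rightarrow> real" where
  "wave q j x =
     q ^ j * (1 - exp (- decay j * real_of_int (snd x)) * cos (freq j * real_of_int (fst x)))"

definition barrier_series :: "real \<Rightarrow> pt \<Rightarrow> real" where
  "barrier_series q x = (\<Sum>j. wave q j x)"

lemma freq_pos: "0 < freq j"
  by (simp add: freq_def)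

lemma freq_le_pi: "freq j \<le> pi"
proof -
  have "(1::real) \<le> 2 ^ j" by simp
  then show ?thesis unfolding freq_def by (simp add: field_simps)
qed

lemma cosh_decay: "cosh (decay j) = 2 - cos (freq j)"
  unfolding decay_def by (rule cosh_arcosh_real) (use cos_le_one[of "freq j"] in linarith)

lemma decay_nonneg: "0 \<le> decay j"
  unfolding decay_def by (rule arcosh_nonneg_real) (use cos_le_one[of "freq j"] in linarith)

lemma one_minus_cos_le: "1 - cos (y::real) \<le> y^2 / 2"
proof -
  have "cos y = cos (2 * (y/2))" by simp
  also have "\<dots> = 1 - 2 * sin (y/2) ^ 2" by (rule cos_double_sin)
  finally have "1 - cos y = 2 * sin (y/2)^2" by simp
  moreover have "sin (y/2)^2 \<le> (y/2)^2"
    using abs_sin_x_le_abs_x[of "y/2"] by (metis abs_ge_zero power2_abs power_mono)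
  ultimately show ?thesis by (simp add: power_divide)
qed

lemma decay_le: "decay j \<le> 4 * freq j"
proof -
  define d where "d = 1 - cos (freq j)"
  have d0: "0 \<le> d" "d \<le> 2"
    using cos_le_one[of "freq j"] cos_ge_minus_one[of "freq j"] by (auto simp: d_def)
  have dmu: "d \<le> (freq j)^2 / 2" unfolding d_def by (rule one_minus_cos_le)
  have x1: "2 - cos (freq j) = 1 + d" by (simp add: d_def)
  have "d * d \<le> 2 * d" using d0 by (intro mult_right_mono) auto
  then have "(1 + d)^2 - 1 \<le> 4 * d" by (simp add: power2_eq_square algebra_simps)
  also have "\<dots> \<le> 2 * (freq j)^2" using dmu by simp
  finally have "((1 + d)^2 - 1) powr (1/2) \<le> (2 * (freq j)^2) powr (1/2)"
    using d0 by (intro powr_mono2) (auto simp: power2_eq_square algebra_simps)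
  also have "\<dots> = sqrt 2 * freq j" using freq_pos[of j]
    by (simp add: powr_half_sqrt real_sqrt_mult)
  also have "\<dots> \<le> 2 * freq j"
    using freq_pos[of j] by (intro mult_right_mono) (auto simp: sqrt2_less_2 less_imp_le)
  finally have sq: "((1 + d)^2 - 1) powr (1/2) \<le> 2 * freq j" .
  have pos: "0 < 1 + d + ((1 + d)^2 - 1) powr (1/2)" using d0 by (simp add: add_pos_nonneg)
  have "decay j = ln (1 + d + ((1 + d)^2 - 1) powr (1/2))"
    by (simp add: decay_def arcosh_def x1)
  also have "\<dots> \<le> d + ((1 + d)^2 - 1) powr (1/2)" using ln_le_minus_one[OF pos] by simp
  also have "\<dots> \<le> (freq j)^2 / 2 + 2 * freq j" using dmu sq by simp
  also have "(freq j)^2 / 2 \<le> 2 * freq j"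
  proof -
    have "freq j * freq j \<le> 4 * freq j" using freq_le_pi[of j] freq_pos[of j] pi_less_4
      by (intro mult_right_mono) auto
    then show ?thesis by (simp add: power2_eq_square)
  qed
  finally show ?thesis by simp
qed

lemma nbr_sum_wave: "nbr_sum (wave q j) x = 4 * wave q j x"
proof -
  define a where "a = decay j"
  define b where "b = freq j"
  define s where "s = real_of_int (snd x)"
  define t where "t = real_of_int (fst x)"
  have ch: "cosh a = 2 - cos b" unfolding a_def b_def by (rule cosh_decay)
  have e1: "exp (- a * (s + 1)) = exp (- a * s) * exp (- a)"
    by (simp add: algebra_simps exp_add[symmetric])
  have e2: "exp (- a * (s - 1)) = exp (- a * s) * exp a"
    by (simp add: algebra_simps exp_add[symmetric])
  have c1: "cos (b * (t + 1)) = cos (b * t) * cos b - sin (b * t) * sin b"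
    by (simp add: algebra_simps cos_add)
  have c2: "cos (b * (t - 1)) = cos (b * t) * cos b + sin (b * t) * sin b"
    by (simp add: algebra_simps cos_diff)
  have ch2: "exp a + exp (- a) = 2 * (2 - cos b)"
    using ch by (simp add: cosh_field_def)
  have "nbr_sum (wave q j) x = q ^ j *
      ((1 - exp (- a * s) * cos (b * (t + 1))) + (1 - exp (- a * s) * cos (b * (t - 1)))
       + (1 - exp (- a * (s + 1)) * cos (b * t)) + (1 - exp (- a * (s - 1)) * cos (b * t)))"
    unfolding nbr_sum_def wave_def a_def[symmetric] b_def[symmetric] s_def t_def
    by (cases x) (simp add: algebra_simps)
  also have "\<dots> = q ^ j * (4 - exp (- a * s) * cos (b * t) * (2 * cos b + (exp a + exp (- a))))"
    unfolding e1 e2 c1 c2 by (simp add: algebra_simps)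
  also have "\<dots> = 4 * wave q j x"
    unfolding ch2 wave_def a_def[symmetric] b_def[symmetric] s_def[symmetric] t_def[symmetric]
    by (simp add: algebra_simps)
  finally show ?thesis .
qed

lemma wave_nonneg: "0 \<le> snd x \<Longrightarrow> 0 < q \<Longrightarrow> 0 \<le> wave q j x"
proof -
  assume h: "0 \<le> snd x" "0 < q"
  define e where "e = exp (- decay j * real_of_int (snd x))"
  define c where "c = cos (freq j * real_of_int (fst x))"
  have e: "e \<le> 1" "0 \<le> e"
    using h decay_nonneg[of j] by (auto simp: e_def mult_nonneg_nonneg)
  have "e * c \<le> e" using e(2) cos_le_one unfolding c_def by (rule mult_left_le[rotated])
  then have "0 \<le> 1 - e * c" using e by linarith
  then show ?thesis using h unfolding wave_def e_def[symmetric] c_def[symmetric] by simp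
qed

lemma wave_le: "0 \<le> snd x \<Longrightarrow> 0 < q \<Longrightarrow>
   wave q j x \<le> q^j * (4 * freq j * real_of_int (snd x) + (freq j * real_of_int (fst x))^2 / 2)"
proof -
  assume h: "0 \<le> snd x" "0 < q"
  define e where "e = exp (- decay j * real_of_int (snd x))"
  define c where "c = cos (freq j * real_of_int (fst x))"
  have e1: "e \<le> 1" "0 \<le> e"
    using h decay_nonneg[of j] by (auto simp: e_def mult_nonneg_nonneg)
  have "1 - e \<le> decay j * real_of_int (snd x)"
    using exp_ge_add_one_self[of "- decay j * real_of_int (snd x)"] by (simp add: e_def)
  also have "\<dots> \<le> 4 * freq j * real_of_int (snd x)"
    using decay_le[of j] h by (intro mult_right_mono) auto
  finally have a: "1 - e \<le> 4 * freq j * real_of_int (snd x)" .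
  have "e * (1 - c) \<le> 1 - c"
    using e1 cos_le_one[of "freq j * real_of_int (fst x)"] by (simp add: c_def mult_left_le_one_le)
  also have "\<dots> \<le> (freq j * real_of_int (fst x))^2 / 2"
    unfolding c_def by (rule one_minus_cos_le)
  finally have b: "e * (1 - c) \<le> (freq j * real_of_int (fst x))^2 / 2" .
  have "1 - e * c = (1 - e) + e * (1 - c)" by (simp add: algebra_simps)
  then have "1 - e * c \<le> 4 * freq j * real_of_int (snd x) + (freq j * real_of_int (fst x))^2 / 2"
    using a b by linarith
  then show ?thesis
    unfolding wave_def e_def[symmetric] c_def[symmetric] using h by (intro mult_left_mono) auto
qed

lemma wave_le_geometric:
  assumes "0 \<le> snd x" "0 < q"
  shows "wave q j x \<le> (q/2)^j * (4 * pi * real_of_int (snd x) + pi^2 * (real_of_int (fst x))^2)"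
proof -
  define t where "t = real_of_int (fst x)"
  define s where "s = real_of_int (snd x)"
  have s0: "0 \<le> s" using assms by (simp add: s_def)
  have p: "(1::real) \<le> 2^j" by simp
  have "(freq j * t)^2 / 2 = (pi^2 * t^2 / 2^j) * (1 / (2 * 2^j))"
    by (simp add: freq_def power_mult_distrib power_divide power2_eq_square mult_ac)
  also have "\<dots> \<le> (pi^2 * t^2 / 2^j) * 1"
    using p by (intro mult_left_mono) (auto simp: order_trans[OF p])
  finally have a: "(freq j * t)^2 / 2 \<le> pi^2 * t^2 / 2^j" by simp
  have b: "4 * freq j * s = 4 * pi * s / 2^j" by (simp add: freq_def)
  have "wave q j x \<le> q^j * (4 * freq j * s + (freq j * t)^2 / 2)"
    unfolding s_def t_def by (rule wave_le[OF assms])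
  also have "\<dots> \<le> q^j * ((4 * pi * s + pi^2 * t^2) / 2^j)"
    using a b assms(2) by (intro mult_left_mono) (auto simp: add_divide_distrib)
  also have "\<dots> = (q/2)^j * (4 * pi * s + pi^2 * t^2)"
    by (simp add: power_divide)
  finally show ?thesis by (simp add: s_def t_def)
qed

lemma summable_wave:
  assumes "0 \<le> snd x" "0 < q" "q < 2"
  shows "summable (\<lambda>j. wave q j x)"
proof (rule summable_comparison_test)
  show "summable (\<lambda>j. (q/2)^j * (4 * pi * real_of_int (snd x) + pi^2 * (real_of_int (fst x))^2))"
    using assms by (intro summable_mult2 summable_geometric) auto
  show "\<exists>N. \<forall>n\<ge>N. norm (wave q n x) \<le>
      (q/2)^n * (4 * pi * real_of_int (snd x) + pi^2 * (real_of_int (fst x))^2)"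
    using wave_le_geometric[OF assms(1,2)] wave_nonneg[OF assms(1,2)] by auto
qed

lemma barrier_series_nonneg:
  assumes "0 \<le> snd x" "0 < q" "q < 2"
  shows "0 \<le> barrier_series q x"
  unfolding barrier_series_def using summable_wave[OF assms] wave_nonneg[OF assms(1,2)]
  by (intro suminf_nonneg) auto

lemma nbr_sum_barrier_series:
  assumes "1 \<le> snd x" "0 < q" "q < 2"
  shows "nbr_sum (barrier_series q) x = 4 * barrier_series q x"
proof -
  have s: "summable (\<lambda>j. wave q j (x + d))" if "0 \<le> snd x + snd d" for d
    using assms that by (intro summable_wave) auto
  have "nbr_sum (barrier_series q) x = (\<Sum>j. wave q j (x + (1,0)) + wave q j (x + (-1,0))
      + wave q j (x + (0,1)) + wave q j (x + (0,-1)))"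
    using s[of "(1,0)"] s[of "(-1,0)"] s[of "(0,1)"] s[of "(0,-1)"] assms(1)
    by (simp add: nbr_sum_def barrier_series_def suminf_add summable_add)
  also have "\<dots> = (\<Sum>j. 4 * wave q j x)"
    using nbr_sum_wave[of q _ x] by (simp add: nbr_sum_def)
  also have "\<dots> = 4 * barrier_series q x" unfolding barrier_series_def
    using assms by (intro suminf_mult summable_wave) auto
  finally show ?thesis .
qed

lemma wave_le_barrier_series:
  assumes "0 \<le> snd x" "0 < q" "q < 2"
  shows "wave q j x \<le> barrier_series q x"
proof -
  have "sum (\<lambda>j. wave q j x) {j} \<le> barrier_series q x"
    unfolding barrier_series_def using summable_wave[OF assms] wave_nonneg[OF assms(1,2)]
    by (intro sum_le_suminf) auto
  then show ?thesis by simp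
qed

lemma exists_power_of_two_between:
  fixes X :: real
  assumes "1 \<le> X"
  shows "\<exists>j. X \<le> 2 ^ j \<and> 2 ^ j < 2 * X"
proof -
  obtain n where "X < 2 ^ n"
    using real_arch_pow[of 2 X] by auto
  define j where "j = (LEAST j. X \<le> 2 ^ j)"
  have "X \<le> 2 ^ j"
    unfolding j_def by (rule LeastI[of _ n]) (use \<open>X < 2 ^ n\<close> in simp)
  moreover have "2 ^ j < 2 * X"
  proof (cases j)
    case 0
    then show ?thesis using assms by simp
  next
    case (Suc i)
    then have "\<not> X \<le> 2 ^ i"
      using not_less_Least[of i "\<lambda>j. X \<le> 2 ^ j"] unfolding j_def by auto
    then show ?thesis using Suc by simp
  qed
  ultimately show ?thesis by blast
qed

lemma powr_le_barrier_series:
  assumes x2: "0 \<le> snd x" and x1: "1 \<le> \<bar>fst x\<bar>" and g: "0 < \<gamma>" and q: "q = 2 powr \<gamma>" "q < 2"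
  shows "real_of_int \<bar>fst x\<bar> powr \<gamma> \<le> barrier_series q x"
proof -
  define X where "X = real_of_int \<bar>fst x\<bar>"
  have X1: "1 \<le> X" using x1 by (simp add: X_def)
  obtain j where j1: "X \<le> 2 ^ j" and j2: "2 ^ j < 2 * X"
    using exists_power_of_two_between[OF X1] by blast
  define \<theta> where "\<theta> = freq j * X"
  have th1: "\<theta> \<le> pi" using j1 by (simp add: \<theta>_def freq_def field_simps)
  have th2: "pi / 2 \<le> \<theta>" using j2 by (simp add: \<theta>_def freq_def field_simps)
  have "0 \<le> cos (pi - \<theta>)" using th1 th2 by (intro cos_ge_zero) auto
  then have cth: "cos \<theta> \<le> 0" by simp
  have "cos (freq j * real_of_int (fst x)) = cos \<theta>"
  proof -
    have "freq j * real_of_int (fst x) = \<theta> \<or> freq j * real_of_int (fst x) = - \<theta>"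
      unfolding \<theta>_def X_def by (auto simp: abs_if)
    then show ?thesis by auto
  qed
  then have c0: "cos (freq j * real_of_int (fst x)) \<le> 0" using cth by simp
  have q0: "0 < q" using q by simp
  have "1 \<le> 1 - exp (- decay j * real_of_int (snd x)) * cos (freq j * real_of_int (fst x))"
    using c0 by (simp add: mult_nonneg_nonpos)
  then have "q^j \<le> wave q j x" unfolding wave_def using q0 by simp
  also have "\<dots> \<le> barrier_series q x" using wave_le_barrier_series[OF x2 q0 q(2)] .
  finally have a: "q^j \<le> barrier_series q x" .
  have "q^j = (2^j) powr \<gamma>"
    unfolding q by (simp add: powr_realpow[symmetric] powr_powr mult.commute)
  moreover have "X powr \<gamma> \<le> (2^j) powr \<gamma>" using j1 X1 g by (intro powr_mono2) auto
  ultimately show ?thesis using a by (simp add: X_def)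
qed

lemma barrier_series_axis_le:
  assumes q: "1 < q" "q < 2"
  shows "barrier_series q (0, 2^J) \<le> q^J * (1 / (q - 1) + 4 * pi / (1 - q / 2))"
proof -
  let ?x = "(0::int, 2^J::int)"
  let ?t = "\<lambda>j. wave q j ?x"
  have x0: "0 \<le> snd ?x" by simp
  have q0: "0 < q" using q by simp
  have s: "summable ?t" by (rule summable_wave[OF x0 q0 q(2)])
  have t1: "?t j \<le> q^j" for j
  proof -
    have "0 \<le> exp (- decay j * real_of_int (snd ?x))" by simp
    then show ?thesis unfolding wave_def using q0 by (simp add: mult_left_le)
  qed
  have t2: "?t (i + J) \<le> 4 * pi * q^J * (q/2)^i" for i
  proof -
    have "?t (i + J) \<le> q^(i+J) *
        (4 * freq (i+J) * real_of_int (snd ?x) + (freq (i+J) * real_of_int (fst ?x))^2 / 2)"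
      by (rule wave_le[OF x0 q0])
    also have "\<dots> = 4 * pi * q^J * (q/2)^i"
      by (simp add: freq_def power_add power_divide field_simps)
    finally show ?thesis .
  qed
  have "barrier_series q ?x = (\<Sum>i. ?t (i + J)) + (\<Sum>i<J. ?t i)"
    unfolding barrier_series_def by (rule suminf_split_initial_segment[OF s])
  also have "(\<Sum>i. ?t (i + J)) \<le> (\<Sum>i. 4 * pi * q^J * (q/2)^i)"
    using t2 summable_ignore_initial_segment[OF s, of J] q
    by (intro suminf_le summable_mult summable_geometric) auto
  also have "\<dots> = 4 * pi * q^J / (1 - q/2)"
    using q by (subst suminf_mult) (auto simp: suminf_geometric)
  also have "(\<Sum>i<J. ?t i) \<le> (\<Sum>i<J. q^i)" using t1 by (intro sum_mono) auto
  also have "\<dots> = (q^J - 1) / (q - 1)" using q by (simp add: geometric_sum)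
  also have "\<dots> \<le> q^J / (q - 1)" using q by (simp add: divide_right_mono)
  finally show ?thesis by (simp add: algebra_simps)
qed

lemma exists_exp_dominating:
  fixes q K C :: real
  assumes q: "1 < q" "q < 2"
  shows "\<exists>J. q^J * K + C \<le> 2^J"
proof -
  have "(\<lambda>J. K * (q/2)^J + C * (1/2)^J) \<longlonglongrightarrow> K * 0 + C * 0"
    using q by (intro tendsto_intros LIMSEQ_power_zero) auto
  then have "eventually (\<lambda>J. K * (q/2)^J + C * (1/2)^J < 1) sequentially"
    by (intro order_tendstoD(2)) auto
  then obtain J where J: "K * (q/2)^J + C * (1/2)^J < 1"
    by (auto simp: eventually_sequentially)
  have "(K * (q/2)^J + C * (1/2)^J) * 2^J = q^J * K + C"
    by (simp add: power_divide field_simps)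
  moreover have "(K * (q/2)^J + C * (1/2)^J) * 2^J \<le> 1 * 2^J"
    using J by (intro mult_right_mono) auto
  ultimately show ?thesis by auto
qed

section \<open>The barrier and the domain \<open>\<hat>W\<close>\<close>

lemma two_powr_inverse_bounds: "1 < \<alpha> \<Longrightarrow> 1 < 2 powr (1 / \<alpha>) \<and> 2 powr (1 / \<alpha>) < (2::real)"
  using powr_less_mono[of 0 "1 / \<alpha>" 2] powr_less_mono[of "1 / \<alpha>" 1 2] by auto

definition barrier :: "real \<Rightarrow> nat \<Rightarrow> pt \<Rightarrow> real" where
  "barrier \<alpha> h0 x = barrier_series (2 powr (1 / \<alpha>)) x + real h0 + 1"

lemma nbr_sum_barrier: "1 < \<alpha> \<Longrightarrow> 1 \<le> snd x \<Longrightarrow> nbr_sum (barrier \<alpha> h0) x = 4 * barrier \<alpha> h0 x"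
  using nbr_sum_barrier_series[of x "2 powr (1 / \<alpha>)"] two_powr_inverse_bounds[of \<alpha>]
  by (simp add: barrier_def nbr_sum_def algebra_simps)

lemma barrier_nonneg: "1 < \<alpha> \<Longrightarrow> 0 \<le> snd x \<Longrightarrow> 0 \<le> barrier \<alpha> h0 x"
  using barrier_series_nonneg[of x "2 powr (1 / \<alpha>)"] two_powr_inverse_bounds[of \<alpha>]
  by (simp add: barrier_def)

lemma line_0_subset_What: "line 0 \<subseteq> What \<alpha> h0"
proof
  fix x :: pt
  assume "x \<in> line 0"
  then show "x \<in> What \<alpha> h0"
    by (cases "\<bar>fst x\<bar> \<le> \<lceil>real h0 powr \<alpha>\<rceil>") (auto simp: What_def D0_def U_def Hplane_def line_def)
qed

lemma start_in_What: "(0, int h0) \<in> What \<alpha> h0"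
proof -
  have "-1 < real h0 powr \<alpha>"
    by (smt (verit) powr_ge_zero)
  then show ?thesis
    by (simp add: What_def D0_def)
qed

lemma axis_notin_What: "int h0 < H \<Longrightarrow> (0, H) \<notin> What \<alpha> h0"
  by (auto simp: What_def D0_def U_def)

lemma snd_less_barrier_on_What:
  assumes "1 < \<alpha>" and x: "x \<in> What \<alpha> h0" "0 \<le> snd x"
  shows "real_of_int (snd x) + 1 \<le> barrier \<alpha> h0 x"
proof -
  let ?q = "2 powr (1 / \<alpha>)"
  have q: "1 < ?q" "?q < 2"
    using two_powr_inverse_bounds[OF \<open>1 < \<alpha>\<close>] by auto
  have G: "0 \<le> barrier_series ?q x"
    using barrier_series_nonneg[of x ?q] q x by simp
  show ?thesis
  proof (cases "x \<in> D0 \<alpha> h0")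
    case True
    then show ?thesis using G by (simp add: barrier_def D0_def)
  next
    case False
    then have U: "real_of_int (snd x) \<le> real_of_int \<bar>fst x\<bar> powr (1 / \<alpha>)"
      using x by (auto simp: What_def U_def)
    show ?thesis
    proof (cases "fst x = 0")
      case True
      then show ?thesis using U G by (simp add: barrier_def)
    next
      case False
      then have "real_of_int \<bar>fst x\<bar> powr (1 / \<alpha>) \<le> barrier_series ?q x"
        using \<open>1 < \<alpha>\<close> q x by (intro powr_le_barrier_series) auto
      then show ?thesis using U by (simp add: barrier_def)
    qed
  qed
qed

lemma finite_strip_outside_What:
  assumes "1 < \<alpha>"
  shows "finite {y. y \<notin> What \<alpha> h0 \<and> 0 \<le> snd y \<and> snd y \<le> R}"
proof -
  define K where "K = max \<lceil>real h0 powr \<alpha>\<rceil> \<lceil>real_of_int R powr \<alpha>\<rceil>"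
  have "\<bar>fst y\<bar> \<le> K" if y: "y \<notin> What \<alpha> h0" "0 \<le> snd y" "snd y \<le> R" for y
  proof (cases "\<bar>fst y\<bar> < \<lceil>real h0 powr \<alpha>\<rceil>")
    case True
    then show ?thesis by (simp add: K_def)
  next
    case False
    then have "real_of_int \<bar>fst y\<bar> powr (1 / \<alpha>) < real_of_int R"
      using y by (auto simp: What_def U_def Hplane_def)
    then have "(real_of_int \<bar>fst y\<bar> powr (1 / \<alpha>)) powr \<alpha> \<le> real_of_int R powr \<alpha>"
      using \<open>1 < \<alpha>\<close> by (intro powr_mono2) auto
    then have "real_of_int \<bar>fst y\<bar> \<le> real_of_int R powr \<alpha>"
      using \<open>1 < \<alpha>\<close> by (simp add: powr_powr)
    then show ?thesis by (simp add: K_def) linarith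
  qed
  then have "{y. y \<notin> What \<alpha> h0 \<and> 0 \<le> snd y \<and> snd y \<le> R} \<subseteq> {-K..K} \<times> {0..R}"
    by (fastforce simp: mem_Times_iff abs_le_iff)
  then show ?thesis
    by (rule finite_subset) simp
qed

lemma exists_axis_point_below_barrier:
  assumes "1 < \<alpha>"
  shows "\<exists>H. int h0 < H \<and> barrier \<alpha> h0 (0, H) \<le> real_of_int H - 1"
proof -
  let ?q = "2 powr (1 / \<alpha>)"
  have q: "1 < ?q" "?q < 2"
    using two_powr_inverse_bounds[OF assms] by auto
  define K where "K = 1 / (?q - 1) + 4 * pi / (1 - ?q / 2)"
  have "0 \<le> K"
    using q by (simp add: K_def)
  obtain J where J: "?q ^ J * K + (real h0 + 2) \<le> 2 ^ J"
    using exists_exp_dominating[OF q] by blast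
  have "barrier_series ?q (0, 2 ^ J) \<le> ?q ^ J * K"
    unfolding K_def by (rule barrier_series_axis_le[OF q])
  then have "barrier \<alpha> h0 (0, 2 ^ J) \<le> 2 ^ J - 1"
    using J by (simp add: barrier_def)
  moreover have "real h0 < 2 ^ J"
    using J \<open>0 \<le> K\<close> q by (smt (verit) zero_le_mult_iff zero_le_power)
  moreover from \<open>real h0 < 2 ^ J\<close> have "int h0 < 2 ^ J"
    by (metis of_int_less_iff of_int_of_nat_eq of_int_numeral of_int_power)
  ultimately show ?thesis
    by (intro exI[of _ "2 ^ J"]) auto
qed

definition slab_outside :: "pt set \<Rightarrow> int \<Rightarrow> pt set" where
  "slab_outside W R = {y. y \<notin> W \<and> 0 < snd y \<and> snd y < R}"

lemma slab_outside_closed: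
  assumes "line 0 \<subseteq> W" "W \<union> line R \<subseteq> S"
    and "y \<in> slab_outside W R" "y' \<in> nbrs y" "y' \<notin> S"
  shows "y' \<in> slab_outside W R"
proof -
  have "snd y' \<noteq> 0" "snd y' \<noteq> R"
    using assms by (auto simp: line_def)
  moreover have "snd y - 1 \<le> snd y'" "snd y' \<le> snd y + 1"
    using assms(4) by (auto simp: nbrs_def)
  ultimately show ?thesis
    using assms by (auto simp: slab_outside_def)
qed

lemma finite_slab_outside_What: "1 < \<alpha> \<Longrightarrow> finite (slab_outside (What \<alpha> h0) R)"
  by (rule finite_subset[OF _ finite_strip_outside_What[of \<alpha> h0 R]]) (auto simp: slab_outside_def)

lemma finite_line_minus_What: "1 < \<alpha> \<Longrightarrow> 0 \<le> N \<Longrightarrow> finite (line N - What \<alpha> h0)"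
  by (rule finite_subset[OF _ finite_strip_outside_What[of \<alpha> h0 N]]) (auto simp: line_def)

lemma height_subsolution:
  fixes \<alpha> :: real and h0 :: nat and R :: int
  defines "g \<equiv> \<lambda>y. (real_of_int (snd y) - barrier \<alpha> h0 y) / real_of_int R"
  assumes "1 < \<alpha>" "0 < R" and y: "y \<in> slab_outside (What \<alpha> h0) R"
  shows "max 0 (g y) \<le>
    step_avg (What \<alpha> h0 \<union> line R) (indicator (line R - What \<alpha> h0)) (\<lambda>y. max 0 (g y)) y"
proof (rule pos_part_subsolution)
  have "nbr_sum g y = 4 * g y"
    using y \<open>1 < \<alpha>\<close>
    by (simp add: g_def nbr_sum_divide nbr_sum_diff nbr_sum_snd nbr_sum_barrier slab_outside_def
        algebra_simps)
  then show "g y \<le> nbr_sum g y / 4" by simp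
next
  fix y' assume "y' \<in> nbrs y"
  then have "0 \<le> snd y'"
    using y by (auto simp: nbrs_def slab_outside_def)
  then have "g y' \<le> indicator (line R - What \<alpha> h0) y'" if "y' \<in> What \<alpha> h0 \<union> line R"
    using that snd_less_barrier_on_What[OF \<open>1 < \<alpha>\<close>, of y' h0] barrier_nonneg[OF \<open>1 < \<alpha>\<close>, of y' h0]
      \<open>0 < R\<close> by (auto simp: g_def line_def divide_le_eq indicator_def)
  then show "g y' \<le> (if y' \<in> What \<alpha> h0 \<union> line R then indicator (line R - What \<alpha> h0) y'
      else indicator (line R - What \<alpha> h0) y' + max 0 (g y'))"
    by (auto simp: indicator_def)
qed (simp add: indicator_def)

text \<open>The tent \<open>min x\<^sub>2 (2N - x\<^sub>2)\<close> loses 2 in its Laplacian at its peak, which the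
  visits to \<open>L\<^sub>N\<close> compensate.\<close>
lemma nbr_sum_tent_ge:
  assumes "0 < snd y" "snd y < 2 * N"
  shows "4 * min (real_of_int (snd y)) (real_of_int (2 * N - snd y)) \<le>
    nbr_sum (\<lambda>y'. indicator (line N) y' + min (real_of_int (snd y')) (real_of_int (2 * N - snd y'))) y"
  using assms unfolding nbr_sum_def
  by (cases y; cases "snd y < N"; cases "snd y = N") (auto simp: line_def indicator_def min_def)

lemma tent_subsolution:
  fixes \<alpha> :: real and h0 :: nat and N :: int
  defines "g \<equiv> \<lambda>y. min (real_of_int (snd y)) (real_of_int (2 * N - snd y)) - barrier \<alpha> h0 y"
  assumes "1 < \<alpha>" "0 < N" and y: "y \<in> slab_outside (What \<alpha> h0) (2 * N)"
  shows "max 0 (g y) \<le>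
    step_avg (What \<alpha> h0 \<union> line (2 * N)) (indicator (line N - What \<alpha> h0)) (\<lambda>y. max 0 (g y)) y"
proof (rule pos_part_subsolution[where \<phi>="\<lambda>y. indicator (line N) y + g y"])
  have "4 * g y \<le> nbr_sum (\<lambda>y. indicator (line N) y + min (real_of_int (snd y))
      (real_of_int (2 * N - snd y))) y - nbr_sum (barrier \<alpha> h0) y"
    using y nbr_sum_tent_ge[of y N] nbr_sum_barrier[OF \<open>1 < \<alpha>\<close>, of y h0]
    by (simp add: g_def slab_outside_def)
  then show "g y \<le> nbr_sum (\<lambda>y. indicator (line N) y + g y) y / 4"
    by (simp add: g_def nbr_sum_diff[symmetric] algebra_simps)
next
  fix y' assume "y' \<in> nbrs y"
  then have y': "0 \<le> snd y'" "snd y' \<le> 2 * N"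
    using y by (auto simp: nbrs_def slab_outside_def)
  then show "indicator (line N) y' + g y' \<le> (if y' \<in> What \<alpha> h0 \<union> line (2 * N)
      then indicator (line N - What \<alpha> h0) y' else indicator (line N - What \<alpha> h0) y' + max 0 (g y'))"
    using snd_less_barrier_on_What[OF \<open>1 < \<alpha>\<close> _ y'(1), of h0] barrier_nonneg[OF \<open>1 < \<alpha>\<close> y'(1)]
      \<open>0 < N\<close> by (auto simp: g_def line_def indicator_def)
qed (simp add: indicator_def)

lemma hit_before_line_lower_bound:
  assumes "1 < \<alpha>" and H: "int h0 < H" "barrier \<alpha> h0 (0, H) \<le> real_of_int H - 1" and "H < R"
  shows "1 / (2 * real_of_int R * 4 ^ nat (H - int h0))
    \<le> hit_before (0, int h0) (line R) (What \<alpha> h0)"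
proof -
  let ?W = "What \<alpha> h0" and ?V = "hit_before_within (line R) (What \<alpha> h0)"
  define g where "g = (\<lambda>y. (real_of_int (snd y) - barrier \<alpha> h0 y) / real_of_int R)"
  define m where "m = nat (H - int h0)"
  have "0 < R" and Hm: "((0, int h0) + (0, int m) :: pt) = (0, H)"
    using H \<open>H < R\<close> by (auto simp: m_def)
  have "\<exists>T. (max 0 (g ((0, int h0) + (0, int m))) - 1 / (2 * R)) / 4 ^ m \<le> ?V T (0, int h0)"
  proof (rule iterates_lower_bound_on_axis[where S="?W \<union> line R" and D="slab_outside ?W R"])
    show "?V (Suc T) y = step_avg (?W \<union> line R) (indicator (line R - ?W)) (?V T) y" for T y
      by (simp add: hit_before_within_Suc)
    show "max 0 (g y) \<le> step_avg (?W \<union> line R) (indicator (line R - ?W)) (\<lambda>y. max 0 (g y)) y"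
      if "y \<in> slab_outside ?W R" for y
      using height_subsolution[OF \<open>1 < \<alpha>\<close> \<open>0 < R\<close> that] by (simp add: g_def)
    show "y' \<in> slab_outside ?W R" if "y \<in> slab_outside ?W R" "y' \<in> nbrs y" "y' \<notin> ?W \<union> line R"
      for y y'
      using slab_outside_closed[OF line_0_subset_What _ that] by simp
    show "finite (slab_outside ?W R)"
      by (rule finite_slab_outside_What[OF \<open>1 < \<alpha>\<close>])
  qed (use H \<open>H < R\<close> Hm axis_notin_What[of h0 _ \<alpha>] in
      \<open>auto simp: hit_before_within_nonneg m_def line_def slab_outside_def\<close>)
  then obtain T where T: "(max 0 (g (0, H)) - 1 / (2 * R)) / 4 ^ m \<le> ?V T (0, int h0)"
    unfolding Hm by blast
  have "1 / R \<le> g (0, H)"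
    using H(2) \<open>0 < R\<close> by (simp add: g_def field_simps)
  have "1 / (2 * R * 4 ^ m) = (1 / R - 1 / (2 * R)) / 4 ^ m"
    using \<open>0 < R\<close> by (simp add: field_simps)
  also have "\<dots> \<le> (max 0 (g (0, H)) - 1 / (2 * R)) / 4 ^ m"
    using \<open>1 / R \<le> g (0, H)\<close> by (intro divide_right_mono) auto
  also have "\<dots> \<le> ?V T (0, int h0)"
    by (rule T)
  also have "\<dots> \<le> hit_before (0, int h0) (line R) ?W"
    by (rule hit_before_within_le_hit_before)
  finally show ?thesis
    by (simp add: m_def)
qed

lemma Hbar_lower_bound:
  assumes "1 < \<alpha>" and H: "int h0 < H" "barrier \<alpha> h0 (0, H) \<le> real_of_int H - 1" and "H < int N"
  shows "ennreal (1 / (2 * 4 ^ nat (H - int h0))) \<le> Hbar (What \<alpha> h0) (int N) (0, int h0)"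
proof -
  let ?W = "What \<alpha> h0" and ?S = "What \<alpha> h0 \<union> line (2 * int N)"
  let ?V = "visits_before ?S (line (int N) - What \<alpha> h0)"
  define g where "g = (\<lambda>y. min (real_of_int (snd y)) (real_of_int (2 * int N - snd y)) - barrier \<alpha> h0 y)"
  define m where "m = nat (H - int h0)"
  have "0 < int N" and Hm: "((0, int h0) + (0, int m) :: pt) = (0, H)"
    using H \<open>H < int N\<close> by (auto simp: m_def)
  then have Z: "line (int N) - ?W - ?S = line (int N) - ?W"
    by (auto simp: line_def)
  have "\<exists>T. (max 0 (g ((0, int h0) + (0, int m))) - 1 / 2) / 4 ^ m \<le> ?V T (0, int h0)"
  proof (rule iterates_lower_bound_on_axis[where S="?S" and D="slab_outside ?W (2 * int N)"])
    show "?V (Suc T) y = step_avg ?S (indicator (line (int N) - ?W)) (?V T) y" for T y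
      using visits_before_Suc[OF finite_line_minus_What[OF \<open>1 < \<alpha>\<close>]] by (simp add: Z)
    show "max 0 (g y) \<le> step_avg ?S (indicator (line (int N) - ?W)) (\<lambda>y. max 0 (g y)) y"
      if "y \<in> slab_outside ?W (2 * int N)" for y
      using tent_subsolution[OF \<open>1 < \<alpha>\<close> \<open>0 < int N\<close> that] by (simp add: g_def)
    show "y' \<in> slab_outside ?W (2 * int N)" if "y \<in> slab_outside ?W (2 * int N)" "y' \<in> nbrs y" "y' \<notin> ?S"
      for y y'
      using slab_outside_closed[OF line_0_subset_What _ that] by simp
    show "finite (slab_outside ?W (2 * int N))"
      by (rule finite_slab_outside_What[OF \<open>1 < \<alpha>\<close>])
  qed (use H \<open>H < int N\<close> Hm axis_notin_What[of h0 _ \<alpha>] in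
      \<open>auto simp: visits_before_nonneg m_def line_def slab_outside_def\<close>)
  then obtain T where T: "(max 0 (g (0, H)) - 1 / 2) / 4 ^ m \<le> ?V T (0, int h0)"
    unfolding Hm by blast
  have "1 \<le> g (0, H)"
    using H(2) \<open>H < int N\<close> by (simp add: g_def)
  then have "(1 / 2) / 4 ^ m \<le> (max 0 (g (0, H)) - 1 / 2) / 4 ^ m"
    by (intro divide_right_mono) auto
  with T have "ennreal (1 / (2 * 4 ^ m)) \<le> ennreal (?V T (0, int h0))"
    by (intro ennreal_leI) simp
  also have "\<dots> \<le> Hbar ?W (int N) (0, int h0)"
    using finite_line_minus_What[OF \<open>1 < \<alpha>\<close>] line_0_subset_What[of \<alpha> h0] start_in_What[of h0 \<alpha>]
    by (intro visits_before_le_Hbar) auto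
  finally show ?thesis
    by (simp add: m_def)
qed

theorem mainTheorem5:
  fixes \<alpha> :: real and h0 :: nat
  assumes "\<alpha> > 1"
  shows "\<exists>c>0.
    (\<forall>\<^sub>F k in sequentially. hit_before (0, int h0) (line (2 ^ k)) (What \<alpha> h0) \<ge> c * 2 powi (- int k)) \<and>
    (\<forall>\<^sub>F N in sequentially. Hbar (What \<alpha> h0) (int N) (0, int h0) \<ge> ennreal c)"
proof -
  obtain H where H: "int h0 < H" "barrier \<alpha> h0 (0, H) \<le> real_of_int H - 1"
    using exists_axis_point_below_barrier[OF assms] by blast
  define c where "c = 1 / (2 * 4 ^ nat (H - int h0) :: real)"
  have "\<forall>\<^sub>F k in sequentially. hit_before (0, int h0) (line (2 ^ k)) (What \<alpha> h0) \<ge> c * 2 powi (- int k)"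
    unfolding eventually_sequentially
  proof (intro exI allI impI)
    fix k assume "nat H \<le> k"
    moreover have "int k < 2 ^ k"
      using less_exp[of k] by (metis of_nat_less_iff of_nat_numeral of_nat_power)
    ultimately have "H < 2 ^ k"
      by linarith
    from hit_before_line_lower_bound[OF assms H this]
    show "hit_before (0, int h0) (line (2 ^ k)) (What \<alpha> h0) \<ge> c * 2 powi (- int k)"
      by (simp add: c_def power_int_minus field_simps)
  qed
  moreover have "\<forall>\<^sub>F N in sequentially. Hbar (What \<alpha> h0) (int N) (0, int h0) \<ge> ennreal c"
    unfolding eventually_sequentially
  proof (intro exI allI impI)
    fix N assume "Suc (nat H) \<le> N"
    then have "H < int N"
      by linarith
    from Hbar_lower_bound[OF assms H this]
    show "Hbar (What \<alpha> h0) (int N) (0, int h0) \<ge> ennreal c"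
      by (simp add: c_def)
  qed
  ultimately show ?thesis
    by (intro exI[of _ c]) (simp add: c_def)
qed

end
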